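(* Let $k,T\ge1$, $\mathbf A\in\mathbb R^{k\times T}$, and define for $\mathbf Y\in\mathbb R^{k\times T}$, $\mathbf M\in\mathbb R^{k\times k}$ $$f(\mathbf Y,\mathbf M,\mathbf A)=\mathrm{Tr}\Big(-\frac4T\mathbf A^\top\mathbf Y+\frac2T\mathbf Y^\top\mathbf M\mathbf Y\Big)-\mathrm{Tr}(\mathbf M^\top\mathbf M).$$ Then $f$ has a saddle point in $(\mathbf Y,\mathbf M)$ and $$\min_{\mathbf Y}\max_{\mathbf M}f(\mathbf Y,\mathbf M,\mathbf A)=\max_{\mathbf M}\min_{\mathbf Y}f(\mathbf Y,\mathbf M,\mathbf A)=-\frac{3}{T^{2/3}}\mathrm{Tr}\big((\mathbf A\mathbf A^\top)^{2/3}\big).$$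
   Context: $(\mathbf A\mathbf A^\top)^{2/3}$ denotes the positive semidefinite matrix power defined via the eigendecomposition of the positive semidefinite matrix $\mathbf A\mathbf A^\top$. *)

theory Defs
  imports "HOL-Analysis.Analysis"
begin

definition diag_mat :: "('n::finite \<Rightarrow> real) \<Rightarrow> real^'n^'n" where
  "diag_mat d = (\<chi> i j. if i = j then d i else 0)"

definition psd_powr :: "real^'n::finite^'n \<Rightarrow> real \<Rightarrow> real^'n^'n" where
  "psd_powr S p = (SOME P. \<exists>U d. orthogonal_matrix U \<and> (\<forall>i. d i \<ge> 0) \<and>
       S = U ** diag_mat d ** transpose U \<and>
       P = U ** diag_mat (\<lambda>i. d i powr p) ** transpose U)"

text \<open>The objective f(Y,M,A); Y and A are k x T, M is k x k, T = CARD('t).\<close>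
definition saddle_f :: "real^'t::finite^'k::finite \<Rightarrow> real^'k^'k \<Rightarrow> real^'t^'k \<Rightarrow> real" where
  "saddle_f Y M A =
     trace ((- (4 / real CARD('t))) *\<^sub>R (transpose A ** Y)
            + (2 / real CARD('t)) *\<^sub>R (transpose Y ** M ** Y))
     - trace (transpose M ** M)"

end

theory Submission
  imports Defs
begin

text \<open>For fixed Y the objective is a concave quadratic in M maximised at M = Y Y^T / T, and for
  fixed M \<succeq> 0 it is a convex quadratic in Y minimised where M Y = A. A pair satisfying both
  equations, Y0 Y0^T = T M0 and M0 Y0 = A, is therefore a saddle point: the two defects are
  ||M - M0||^2 and (2/T) tr((Y - Y0)^T M0 (Y - Y0)), both nonnegative, and the saddle value is
  -3 tr(M0^T M0). Eliminating Y0 gives M0^3 = A A^T / T, so with the spectral decomposition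
  A A^T = U diag(d) U^T one takes M0 = T^(-1/3) U diag(d^(1/3)) U^T and
  Y0 = T^(1/3) U diag(d^(-1/3)) U^T A, the inverse power acting on the support of d only; then
  tr(M0^T M0) = T^(-2/3) tr((A A^T)^(2/3)). A saddle point makes min-max and max-min equal.\<close>

lemma matrix_scaleR_mult_left: "(c *\<^sub>R (X::real^'m^'n)) ** Y = c *\<^sub>R (X ** Y)"
  by (simp add: scalar_matrix_assoc)

lemma matrix_scaleR_mult_right: "(X::real^'m^'n) ** (c *\<^sub>R Y) = c *\<^sub>R (X ** Y)"
  by (simp add: matrix_scalar_ac scalar_matrix_assoc)

lemma matrix_diff_rdistrib: "((X::real^'m^'n) - Y) ** Z = X ** Z - Y ** Z"
  by (simp add: matrix_matrix_mult_def vec_eq_iff sum_subtractf algebra_simps)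

lemma matrix_diff_ldistrib: "(X::real^'m^'n) ** (Y - Z) = X ** Y - X ** Z"
  by (simp add: matrix_matrix_mult_def vec_eq_iff sum_subtractf algebra_simps)

lemma transpose_diff: "transpose ((X::real^'m^'n) - Y) = transpose X - transpose Y"
  by (simp add: transpose_def vec_eq_iff)

lemma trace_scaleR: "trace (c *\<^sub>R (X::real^'n^'n)) = c * trace X"
  by (simp add: trace_def sum_distrib_left)

lemma trace_transpose: "trace (transpose (X::real^'n^'n)) = trace X"
  by (simp add: trace_def transpose_def)

lemma trace_transpose_mult_self_nonneg: "trace (transpose (X::real^'m^'n) ** X) \<ge> 0"
  by (simp add: trace_def matrix_matrix_mult_def transpose_def sum_nonneg)

lemma trace_orthogonal_conj:
  "orthogonal_matrix U \<Longrightarrow> trace (U ** X ** transpose U) = trace (X::real^'n^'n)"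
  by (metis matrix_mul_assoc matrix_mul_rid orthogonal_matrix_def trace_mul_sym)

lemma orthogonal_conj_mult:
  fixes U :: "real^'n^'n"
  assumes "orthogonal_matrix U"
  shows "U ** X ** transpose U ** (U ** Y ** transpose U) = U ** (X ** Y) ** transpose U"
proof -
  have "U ** X ** transpose U ** (U ** Y ** transpose U)
      = U ** X ** (transpose U ** U) ** Y ** transpose U"
    by (simp add: matrix_mul_assoc)
  also have "\<dots> = U ** X ** Y ** transpose U"
    using assms by (simp add: orthogonal_matrix_def)
  finally show ?thesis
    by (simp add: matrix_mul_assoc)
qed

lemma diag_mat_mult: "diag_mat a ** diag_mat b = diag_mat (\<lambda>i. a i * b i)"
  unfolding diag_mat_def matrix_matrix_mult_def
  by (simp add: vec_eq_iff if_distrib[of "\<lambda>x. x * _"] cong: if_cong)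

lemma diag_mat_powr_mult:
  "diag_mat (\<lambda>i. d i powr a) ** diag_mat (\<lambda>i. d i powr b) = diag_mat (\<lambda>i. d i powr (a + b))"
  by (simp add: diag_mat_mult powr_add)

lemma trace_diag_mat: "trace (diag_mat d) = sum d UNIV"
  by (simp add: trace_def diag_mat_def)

lemma transpose_diag_mat [simp]: "transpose (diag_mat d) = diag_mat d"
  by (simp add: transpose_def diag_mat_def vec_eq_iff)

subsection \<open>Spectral theorem for real symmetric matrices\<close>

lemma symmetric_matrix_inner_commute:
  fixes S :: "real^'n^'n"
  assumes "transpose S = S"
  shows "x \<bullet> (S *v y) = (S *v x) \<bullet> y"
  by (metis assms dot_lmul_matrix vector_transpose_matrix)

lemma linear_coeff_zero_if_quadratic_nonpos:
  fixes a b :: real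
  assumes "\<And>t. 2 * t * a + t\<^sup>2 * b \<le> 0"
  shows "a = 0"
proof (rule ccontr)
  assume "a \<noteq> 0"
  define c where "c = \<bar>b\<bar> + 1"
  have "c > 0" and "2 * c + b > 0"
    unfolding c_def by auto
  have "(2 * (a/c) * a + (a/c)\<^sup>2 * b) * c\<^sup>2 \<le> 0"
    using assms[of "a/c"] by (simp add: mult_nonpos_nonneg)
  also have "(2 * (a/c) * a + (a/c)\<^sup>2 * b) * c\<^sup>2 = a\<^sup>2 * (2 * c + b)"
    using \<open>c > 0\<close> by (simp add: field_simps power2_eq_square)
  finally show False
    using \<open>2 * c + b > 0\<close> \<open>a \<noteq> 0\<close> by (simp add: mult_le_0_iff)
qed

text \<open>The residual w = S v - (v \<bullet> S v) v lies in V and is orthogonal to v; maximality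
  along the line v + t w kills the linear term w \<bullet> S v, whence w \<bullet> w = 0.\<close>

lemma rayleigh_maximiser_eigenvector:
  fixes S :: "real^'n^'n"
  assumes sym: "transpose S = S" and V: "subspace V" and inv: "\<forall>x\<in>V. S *v x \<in> V"
    and v: "v \<in> V" "v \<bullet> v = 1"
    and max: "\<And>y. y \<in> V \<Longrightarrow> y \<bullet> (S *v y) \<le> (v \<bullet> (S *v v)) * (y \<bullet> y)"
  shows "S *v v = (v \<bullet> (S *v v)) *\<^sub>R v"
proof -
  define l where "l = v \<bullet> (S *v v)"
  define w where "w = S *v v - l *\<^sub>R v"
  have w: "w \<in> V" "v \<bullet> w = 0"
    using inv v V unfolding w_def l_def by (auto simp: subspace_diff subspace_scale inner_diff_right)
  have "w \<bullet> (S *v v) = 0"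
  proof (rule linear_coeff_zero_if_quadratic_nonpos)
    fix t :: real
    have "v + t *\<^sub>R w \<in> V"
      using v w V by (simp add: subspace_add subspace_scale)
    from max[OF this]
    have "l + 2 * t * (w \<bullet> (S *v v)) + t\<^sup>2 * (w \<bullet> (S *v w)) \<le> l * (1 + t\<^sup>2 * (w \<bullet> w))"
      using v(2) w(2) symmetric_matrix_inner_commute[OF sym, of v w]
      by (simp add: l_def matrix_vector_right_distrib matrix_vector_mult_scaleR inner_add_left
          inner_add_right inner_commute power2_eq_square algebra_simps)
    then show "2 * t * (w \<bullet> (S *v v)) + t\<^sup>2 * (w \<bullet> (S *v w) - l * (w \<bullet> w)) \<le> 0"
      by (simp add: algebra_simps)
  qed
  then have "w \<bullet> w = 0"
    using w(2) unfolding w_def by (simp add: inner_diff_left inner_diff_right inner_commute)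
  then show ?thesis
    unfolding w_def l_def by simp
qed

lemma symmetric_eigenvector_in_invariant_subspace:
  fixes S :: "real^'n^'n"
  assumes sym: "transpose S = S" and V: "subspace V" "V \<noteq> {0}"
    and inv: "\<forall>x\<in>V. S *v x \<in> V"
  obtains v l where "v \<in> V" "norm v = 1" "S *v v = l *\<^sub>R v"
proof -
  define q where "q x = x \<bullet> (S *v x)" for x
  define K where "K = V \<inter> sphere 0 1"
  have "compact K"
    unfolding K_def by (simp add: V(1) closed_Int_compact closed_subspace)
  obtain x where "x \<in> V" "x \<noteq> 0"
    using V subspace_0 by blast
  then have "x /\<^sub>R norm x \<in> K"
    using V(1) unfolding K_def by (simp add: subspace_scale)
  moreover have "continuous_on K q"
    unfolding q_def by (intro continuous_intros linear_continuous_on matrix_vector_mul_linear)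
  ultimately obtain v where v: "v \<in> K" "\<forall>y\<in>K. q y \<le> q v"
    using continuous_attains_sup[OF \<open>compact K\<close>] by blast
  have vV: "v \<in> V" and "norm v = 1"
    using v(1) unfolding K_def by auto
  have "q y \<le> q v * (y \<bullet> y)" if "y \<in> V" "y \<noteq> 0" for y
  proof -
    have "y /\<^sub>R norm y \<in> K"
      using that V(1) unfolding K_def by (simp add: subspace_scale)
    then have "q (y /\<^sub>R norm y) \<le> q v"
      using v(2) by blast
    moreover have "q y = (norm y)\<^sup>2 * q (y /\<^sub>R norm y)"
      using that(2) unfolding q_def by (simp add: matrix_vector_mult_scaleR power2_eq_square field_simps)
    ultimately show ?thesis
      by (simp add: power2_norm_eq_inner mult.commute[of _ "y \<bullet> y"] mult_left_mono)
  qed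
  then have "S *v v = q v *\<^sub>R v"
    using rayleigh_maximiser_eigenvector[OF sym V(1) inv vV] \<open>norm v = 1\<close>
    by (metis inner_zero_left mult_zero_right norm_eq_1 order.refl q_def)
  then show ?thesis
    using that vV \<open>norm v = 1\<close> by blast
qed

lemma span_insert_unit_orthogonal_complement:
  assumes V: "subspace V" and v: "v \<in> V" "v \<bullet> v = 1"
    and B: "span B = V \<inter> {x. v \<bullet> x = 0}"
  shows "span (insert v B) = V"
proof
  show "span (insert v B) \<subseteq> V"
    using B span_superset[of B] v(1) V by (intro span_minimal) auto
  show "V \<subseteq> span (insert v B)"
  proof
    fix x assume "x \<in> V"
    then have "x - (v \<bullet> x) *\<^sub>R v \<in> span B"
      using B v V by (simp add: subspace_diff subspace_scale inner_diff_right)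
    then have "x - (v \<bullet> x) *\<^sub>R v \<in> span (insert v B)"
      using span_mono[of B "insert v B"] by blast
    moreover have "(v \<bullet> x) *\<^sub>R v \<in> span (insert v B)"
      by (simp add: span_base span_mul)
    ultimately show "x \<in> span (insert v B)"
      using span_add by fastforce
  qed
qed

lemma orthonormal_eigenbasis_invariant_subspace:
  fixes S :: "real^'n^'n"
  assumes sym: "transpose S = S" and "subspace V" and "\<forall>x\<in>V. S *v x \<in> V"
  shows "\<exists>B. B \<subseteq> V \<and> pairwise orthogonal B \<and> span B = V \<and>
    (\<forall>b\<in>B. norm b = 1 \<and> (\<exists>l. S *v b = l *\<^sub>R b))"
  using assms(2,3)
proof (induction "dim V" arbitrary: V rule: less_induct)
  case (less V)
  show ?case
  proof (cases "V = {0}")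
    case True
    then show ?thesis by (intro exI[of _ "{}"]) auto
  next
    case False
    obtain v l where v: "v \<in> V" "norm v = 1" "S *v v = l *\<^sub>R v"
      using symmetric_eigenvector_in_invariant_subspace[OF sym less.prems(1) False less.prems(2)] .
    have vv: "v \<bullet> v = 1"
      using v(2) by (simp add: norm_eq_1)
    define V' where "V' = V \<inter> {x. v \<bullet> x = 0}"
    have "subspace V'"
      unfolding V'_def by (simp add: less.prems(1) subspace_inter subspace_hyperplane)
    moreover have "\<forall>x\<in>V'. S *v x \<in> V'"
      using less.prems(2) v(3) symmetric_matrix_inner_commute[OF sym, of v]
      unfolding V'_def by auto
    moreover have "dim V' < dim V"
    proof -
      have "v \<notin> V'"
        using vv unfolding V'_def by auto
      then have "V' \<subset> V"
        using v(1) unfolding V'_def by blast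
      then show ?thesis
        using \<open>subspace V'\<close> less.prems(1) by (intro dim_psubset) (metis span_eq_iff)
    qed
    ultimately obtain B where B: "B \<subseteq> V'" "pairwise orthogonal B" "span B = V'"
      "\<forall>b\<in>B. norm b = 1 \<and> (\<exists>l. S *v b = l *\<^sub>R b)"
      using less.hyps by blast
    show ?thesis
    proof (intro exI[of _ "insert v B"] conjI)
      show "insert v B \<subseteq> V"
        using B(1) v(1) unfolding V'_def by auto
      show "pairwise orthogonal (insert v B)"
        using B(1,2) unfolding V'_def
        by (auto simp: pairwise_insert orthogonal_def inner_commute)
      show "span (insert v B) = V"
        using span_insert_unit_orthogonal_complement[OF less.prems(1) v(1) vv] B(3)
        unfolding V'_def by blast
      show "\<forall>b\<in>insert v B. norm b = 1 \<and> (\<exists>l. S *v b = l *\<^sub>R b)"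
        using B(4) v by auto
    qed
  qed
qed

lemma orthogonal_eigencolumns_diagonalize:
  fixes S U :: "real^'n^'n"
  assumes U: "orthogonal_matrix U" and eigen: "\<And>j. S *v column j U = d j *\<^sub>R column j U"
  shows "S = U ** diag_mat d ** transpose U"
proof -
  have "(S ** U) $ i $ j = (U ** diag_mat d) $ i $ j" for i j
  proof -
    have "(S ** U) $ i $ j = (S *v column j U) $ i"
      by (simp add: matrix_matrix_mult_def matrix_vector_mult_def column_def)
    also have "\<dots> = d j * U $ i $ j"
      unfolding eigen by (simp add: column_def)
    also have "\<dots> = (U ** diag_mat d) $ i $ j"
      by (simp add: matrix_matrix_mult_def diag_mat_def if_distrib[of "\<lambda>x. _ * x"] cong: if_cong)
    finally show ?thesis .
  qed
  then have "S ** U = U ** diag_mat d"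
    by (simp add: vec_eq_iff)
  then show ?thesis
    using U by (metis matrix_mul_assoc matrix_mul_rid orthogonal_matrix_def)
qed

lemma symmetric_matrix_diagonalization:
  fixes S :: "real^'n^'n"
  assumes sym: "transpose S = S"
  obtains U d where "orthogonal_matrix U" "S = U ** diag_mat d ** transpose U"
    "\<And>j. d j = column j U \<bullet> (S *v column j U)"
proof -
  obtain B where B: "pairwise orthogonal B" "span B = UNIV"
      "\<forall>b\<in>B. norm b = 1 \<and> (\<exists>l. S *v b = l *\<^sub>R b)"
    using orthonormal_eigenbasis_invariant_subspace[OF sym, of UNIV] by auto
  have "independent B"
    using B(1,3) pairwise_orthogonal_independent by fastforce
  then have "finite B" and "card B = CARD('n)"
    using dim_span_eq_card_independent[of B] B(2) finiteI_independent by auto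
  then obtain f where f: "bij_betw f (UNIV::'n set) B"
    by (metis finite_class.finite_UNIV finite_same_card_bij)
  then have fB: "f j \<in> B" and "inj f" for j
    by (auto simp: bij_betw_def)
  define U where "U = (\<chi> i j. f j $ i)"
  have colU: "column j U = f j" for j
    by (simp add: U_def column_def vec_eq_iff)
  have "orthogonal (f i) (f j)" if "i \<noteq> j" for i j
    using B(1) fB \<open>inj f\<close> that by (auto simp: pairwise_def inj_eq)
  moreover have "norm (f j) = 1" for j
    using B(3) fB by blast
  ultimately have U: "orthogonal_matrix U"
    unfolding orthogonal_matrix_orthonormal_columns colU by blast
  define d where "d j = f j \<bullet> (S *v f j)" for j
  have eigen: "S *v column j U = d j *\<^sub>R column j U" for j
  proof -
    obtain l where l: "S *v f j = l *\<^sub>R f j"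
      using B(3) fB by blast
    moreover have "f j \<bullet> f j = 1"
      using B(3) fB by (simp add: norm_eq_1)
    ultimately show ?thesis
      by (simp add: colU d_def)
  qed
  show ?thesis
  proof (rule that[OF U orthogonal_eigencolumns_diagonalize[OF U eigen]])
    show "d j = column j U \<bullet> (S *v column j U)" for j
      by (simp add: colU d_def)
  qed
qed

lemma gram_matrix_diagonalization:
  fixes A :: "real^'m^'n"
  obtains U d where "orthogonal_matrix U" "\<And>j. d j \<ge> 0"
    "A ** transpose A = U ** diag_mat d ** transpose U"
proof -
  have sym: "transpose (A ** transpose A) = A ** transpose A"
    by (simp add: matrix_transpose_mul)
  obtain U d where U: "orthogonal_matrix U" "A ** transpose A = U ** diag_mat d ** transpose U"
    and d: "\<And>j. d j = column j U \<bullet> ((A ** transpose A) *v column j U)"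
    using symmetric_matrix_diagonalization[OF sym] by blast
  have "d j = (transpose A *v column j U) \<bullet> (transpose A *v column j U)" for j
    unfolding d matrix_vector_mul_assoc[symmetric] dot_lmul_matrix[symmetric] by simp
  then have "d j \<ge> 0" for j
    by simp
  then show ?thesis
    using that U by blast
qed

lemma psd_powr_spectral:
  assumes "orthogonal_matrix U" "\<And>i. d i \<ge> 0" "S = U ** diag_mat d ** transpose U"
  obtains V e where "orthogonal_matrix V" "\<And>i. e i \<ge> 0" "S = V ** diag_mat e ** transpose V"
    "psd_powr S p = V ** diag_mat (\<lambda>i. e i powr p) ** transpose V"
proof -
  have "\<exists>P U d. orthogonal_matrix U \<and> (\<forall>i. d i \<ge> 0) \<and> S = U ** diag_mat d ** transpose U \<and>
      P = U ** diag_mat (\<lambda>i. d i powr p) ** transpose U"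
    using assms by blast
  from someI_ex[OF this] show ?thesis
    using that unfolding psd_powr_def by blast
qed

text \<open>Since 0 powr 0 = 0, diag (d powr 0) is the projection onto the support of d. Writing
  A = U B with B B^T = diag d, a row of B vanishes wherever d does, so this projection fixes B.\<close>

lemma gram_support_projection_fixes:
  fixes A :: "real^'m^'n"
  assumes U: "orthogonal_matrix U" and AA: "A ** transpose A = U ** diag_mat d ** transpose U"
  shows "U ** diag_mat (\<lambda>i. d i powr 0) ** transpose U ** A = A"
proof -
  define B where "B = transpose U ** A"
  have "B ** transpose B = transpose U ** (A ** transpose A) ** U"
    unfolding B_def by (simp add: matrix_transpose_mul matrix_mul_assoc)
  also have "\<dots> = (transpose U ** U) ** diag_mat d ** (transpose U ** U)"
    unfolding AA by (simp add: matrix_mul_assoc)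
  finally have BB: "B ** transpose B = diag_mat d"
    using U by (simp add: orthogonal_matrix_def)
  have "B $ i $ k = 0" if "d i = 0" for i k
  proof -
    have "(\<Sum>j\<in>UNIV. B $ i $ j * B $ i $ j) = (B ** transpose B) $ i $ i"
      by (simp add: matrix_matrix_mult_def transpose_def)
    also have "\<dots> = 0"
      using BB that by (simp add: diag_mat_def)
    finally show ?thesis
      by (simp add: sum_nonneg_eq_0_iff)
  qed
  then have "diag_mat (\<lambda>i. d i powr 0) ** B = B"
    by (auto simp: vec_eq_iff diag_mat_def matrix_matrix_mult_def if_distrib[of "\<lambda>x. x * _"]
        cong: if_cong)
  then show ?thesis
    using U unfolding B_def
    by (metis matrix_mul_assoc matrix_mul_lid orthogonal_matrix_def)
qed

lemma critical_point_construction: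
  fixes A :: "real^'m^'n" and c :: real
  assumes c: "c > 0" and U: "orthogonal_matrix U" and d: "\<And>i. d i \<ge> 0"
    and AA: "A ** transpose A = U ** diag_mat d ** transpose U"
  obtains Y0 M0 where "Y0 ** transpose Y0 = c *\<^sub>R M0" "M0 ** Y0 = A"
    "trace (transpose M0 ** M0) = c powr (-2/3) * (\<Sum>i\<in>UNIV. d i powr (2/3))"
proof -
  have scalars: "c powr (1/3) * c powr (1/3) = c * c powr (- (1/3))"
      "c powr (1/3) * c powr (- (1/3)) = 1" "c powr (- (1/3)) * c powr (- (1/3)) = c powr (- (2/3))"
    using c by (simp_all flip: powr_add add: powr_mult_base)
  define Dp where "Dp a = diag_mat (\<lambda>i. d i powr a)" for a
  have Dp_mult: "Dp a ** Dp b = Dp (a + b)" for a b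
    unfolding Dp_def by (rule diag_mat_powr_mult)
  have D: "diag_mat d = Dp 1"
    unfolding Dp_def using d by simp
  have conj: "U ** X ** transpose U ** (U ** Y ** transpose U) = U ** (X ** Y) ** transpose U"
    for X Y
    using orthogonal_conj_mult[OF U] .
  define P where "P = U ** Dp (-1/3) ** transpose U"
  define Y0 where "Y0 = c powr (1/3) *\<^sub>R (P ** A)"
  define M0 where "M0 = c powr (-1/3) *\<^sub>R (U ** Dp (1/3) ** transpose U)"
  have "transpose P = P"
    unfolding P_def Dp_def by (simp add: matrix_transpose_mul matrix_mul_assoc)
  then have "Y0 ** transpose Y0 = (c powr (1/3) * c powr (1/3)) *\<^sub>R (P ** (A ** transpose A) ** P)"
    unfolding Y0_def
    by (simp add: transpose_scalar matrix_transpose_mul matrix_scaleR_mult_left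
        matrix_scaleR_mult_right matrix_mul_assoc)
  also have "P ** (A ** transpose A) ** P = U ** Dp (1/3) ** transpose U"
    unfolding AA P_def D conj Dp_mult by simp
  finally have "Y0 ** transpose Y0 = c *\<^sub>R M0"
    unfolding M0_def scalars by simp
  then show ?thesis
  proof (rule that)
    have "M0 ** Y0 = U ** Dp (1/3) ** transpose U ** P ** A"
      unfolding M0_def Y0_def
      by (simp add: matrix_scaleR_mult_left matrix_scaleR_mult_right matrix_mul_assoc scalars)
    also have "U ** Dp (1/3) ** transpose U ** P = U ** Dp 0 ** transpose U"
      unfolding P_def conj Dp_mult by simp
    finally show "M0 ** Y0 = A"
      using gram_support_projection_fixes[OF U AA] by (simp add: Dp_def)
    have "transpose M0 = M0"
      unfolding M0_def Dp_def by (simp add: transpose_scalar matrix_transpose_mul matrix_mul_assoc)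
    then have "transpose M0 ** M0
        = c powr (-2/3) *\<^sub>R (U ** Dp (1/3) ** transpose U ** (U ** Dp (1/3) ** transpose U))"
      unfolding M0_def by (simp add: matrix_scaleR_mult_left matrix_scaleR_mult_right scalars)
    also have "\<dots> = c powr (-2/3) *\<^sub>R (U ** Dp (2/3) ** transpose U)"
      unfolding conj Dp_mult by simp
    finally show "trace (transpose M0 ** M0) = c powr (-2/3) * (\<Sum>i\<in>UNIV. d i powr (2/3))"
      by (simp add: trace_scaleR trace_orthogonal_conj[OF U] trace_diag_mat Dp_def)
  qed
qed

lemma saddle_f_expand:
  "saddle_f (Y::real^'t::finite^'k::finite) M A =
    - (4 / real CARD('t)) * trace (transpose A ** Y)
    + (2 / real CARD('t)) * trace (transpose Y ** M ** Y) - trace (transpose M ** M)"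
  unfolding saddle_f_def trace_add trace_scaleR by simp

lemma trace_quadratic_form_gram:
  fixes Y0 :: "real^'m^'n"
  assumes "Y0 ** transpose Y0 = c *\<^sub>R M0"
  shows "trace (transpose Y0 ** M ** Y0) = c * trace (M ** M0)"
proof -
  have "trace (transpose Y0 ** M ** Y0) = trace ((Y0 ** transpose Y0) ** M)"
    using trace_mul_sym[of "transpose Y0 ** M" Y0] by (simp add: matrix_mul_assoc)
  also have "\<dots> = c * trace (M0 ** M)"
    by (simp add: assms matrix_scaleR_mult_left trace_scaleR)
  finally show ?thesis
    by (simp add: trace_mul_sym[of M0])
qed

lemma trace_quadratic_form_diff:
  fixes Y Z :: "real^'m^'n"
  shows "trace (transpose (Y - Z) ** M ** (Y - Z)) = trace (transpose Y ** M ** Y)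
    - trace (transpose Y ** M ** Z) - trace (transpose Z ** M ** Y) + trace (transpose Z ** M ** Z)"
  by (simp add: transpose_diff matrix_diff_rdistrib matrix_diff_ldistrib trace_sub)

lemma gram_symmetric:
  fixes Y0 :: "real^'m^'n"
  assumes "Y0 ** transpose Y0 = c *\<^sub>R M0" "c \<noteq> 0"
  shows "transpose M0 = M0"
proof -
  have "transpose (c *\<^sub>R M0) = c *\<^sub>R M0"
    unfolding assms(1)[symmetric] by (simp add: matrix_transpose_mul)
  then show ?thesis
    using assms(2) by (simp add: transpose_scalar)
qed

lemma saddle_f_gap_in_M:
  fixes Y0 :: "real^'t::finite^'k::finite"
  assumes gram: "Y0 ** transpose Y0 = real CARD('t) *\<^sub>R M0"
  shows "saddle_f Y0 M0 A - saddle_f Y0 M A = trace (transpose (M - M0) ** (M - M0))"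
proof -
  have sym: "transpose M0 = M0"
    using gram_symmetric[OF gram] by simp
  have "trace (transpose M ** M0) = trace (M ** M0)"
    by (metis matrix_transpose_mul sym trace_mul_sym trace_transpose)
  moreover have "trace (M0 ** M) = trace (M ** M0)"
    by (rule trace_mul_sym)
  ultimately show ?thesis
    unfolding saddle_f_expand trace_quadratic_form_gram[OF gram]
    by (simp add: transpose_diff matrix_diff_rdistrib matrix_diff_ldistrib trace_sub sym)
qed

lemma saddle_f_gap_in_Y:
  fixes Y0 :: "real^'t::finite^'k::finite"
  defines "T \<equiv> real CARD('t)"
  assumes gram: "Y0 ** transpose Y0 = T *\<^sub>R M0" and MY: "M0 ** Y0 = A"
  shows "saddle_f Y M0 A - saddle_f Y0 M0 A = (2 / T) * trace (transpose (Y - Y0) ** M0 ** (Y - Y0))"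
proof -
  have sym: "transpose M0 = M0"
    using gram_symmetric[OF gram] by (simp add: T_def)
  have At: "transpose A = transpose Y0 ** M0"
    using MY sym by (metis matrix_transpose_mul)
  have "transpose (transpose Y ** M0 ** Y0) = transpose Y0 ** M0 ** Y"
    by (simp add: matrix_transpose_mul sym matrix_mul_assoc)
  then have "trace (transpose Y ** M0 ** Y0) = trace (transpose Y0 ** M0 ** Y)"
    by (metis trace_transpose)
  then have "trace (transpose (Y - Y0) ** M0 ** (Y - Y0)) = trace (transpose Y ** M0 ** Y)
      - 2 * trace (transpose Y0 ** M0 ** Y) + trace (transpose Y0 ** M0 ** Y0)"
    unfolding trace_quadratic_form_diff by simp
  moreover have "4 / T = 2 * (2 / T)"
    by simp
  ultimately show ?thesis
    unfolding saddle_f_expand T_def[symmetric] At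
    by (simp only:) (simp add: algebra_simps)
qed

lemma trace_quadratic_form_gram_nonneg:
  fixes Y0 :: "real^'m^'n"
  assumes "Y0 ** transpose Y0 = c *\<^sub>R M0" "c > 0"
  shows "trace (transpose Z ** M0 ** Z) \<ge> 0"
proof -
  have "M0 = (1 / c) *\<^sub>R (Y0 ** transpose Y0)"
    using assms by simp
  then have "transpose Z ** M0 ** Z = (1 / c) *\<^sub>R (transpose (transpose Y0 ** Z) ** (transpose Y0 ** Z))"
    by (simp add: matrix_transpose_mul matrix_scaleR_mult_left matrix_scaleR_mult_right matrix_mul_assoc)
  then show ?thesis
    using trace_transpose_mult_self_nonneg[of "transpose Y0 ** Z"] assms(2) by (simp add: trace_scaleR)
qed

lemma saddle_f_saddle_point:
  fixes Y0 :: "real^'t::finite^'k::finite"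
  assumes gram: "Y0 ** transpose Y0 = real CARD('t) *\<^sub>R M0" and MY: "M0 ** Y0 = A"
  shows "saddle_f Y0 M A \<le> saddle_f Y0 M0 A" "saddle_f Y0 M0 A \<le> saddle_f Y M0 A"
proof -
  show "saddle_f Y0 M A \<le> saddle_f Y0 M0 A"
    using saddle_f_gap_in_M[OF gram, of A M] trace_transpose_mult_self_nonneg[of "M - M0"]
    by simp
  have "0 \<le> (2 / real CARD('t)) * trace (transpose (Y - Y0) ** M0 ** (Y - Y0))"
    using trace_quadratic_form_gram_nonneg[OF gram, of "Y - Y0"] by simp
  then show "saddle_f Y0 M0 A \<le> saddle_f Y M0 A"
    using saddle_f_gap_in_Y[OF gram MY, of Y] by simp
qed

lemma saddle_f_saddle_value:
  fixes Y0 :: "real^'t::finite^'k::finite"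
  assumes gram: "Y0 ** transpose Y0 = real CARD('t) *\<^sub>R M0" and MY: "M0 ** Y0 = A"
  shows "saddle_f Y0 M0 A = -3 * trace (transpose M0 ** M0)"
proof -
  have sym: "transpose M0 = M0"
    using gram_symmetric[OF gram] by simp
  have "transpose A ** Y0 = transpose Y0 ** M0 ** Y0"
    using MY sym by (metis matrix_transpose_mul)
  then show ?thesis
    unfolding saddle_f_expand using trace_quadratic_form_gram[OF gram, of M0] sym
    by simp
qed

lemma saddle_point_minimax:
  fixes f :: "'a \<Rightarrow> 'b \<Rightarrow> 'c::complete_lattice"
  assumes "\<And>y. f x0 y \<le> f x0 y0" and "\<And>x. f x0 y0 \<le> f x y0"
  shows "(INF x. SUP y. f x y) = f x0 y0" and "(SUP y. INF x. f x y) = f x0 y0"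
proof -
  have "(INF x. SUP y. f x y) \<le> f x0 y0"
    using assms(1) by (meson INF_lower2 SUP_least UNIV_I)
  moreover have "f x0 y0 \<le> (INF x. SUP y. f x y)"
    using assms(2) by (meson INF_greatest SUP_upper2 UNIV_I)
  ultimately show "(INF x. SUP y. f x y) = f x0 y0"
    by (rule antisym)
  have "(SUP y. INF x. f x y) \<le> f x0 y0"
    using assms(1) by (meson INF_lower2 SUP_least UNIV_I)
  moreover have "f x0 y0 \<le> (SUP y. INF x. f x y)"
    using assms(2) by (meson INF_greatest SUP_upper2 UNIV_I)
  ultimately show "(SUP y. INF x. f x y) = f x0 y0"
    by (rule antisym)
qed

theorem proposition1:
  fixes A :: "real^'t::finite^'k::finite"
  shows "(\<exists>Y0 M0. \<forall>Y M. saddle_f Y0 M A \<le> saddle_f Y0 M0 A \<and>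
                          saddle_f Y0 M0 A \<le> saddle_f Y M0 A)
    \<and> (INF Y. SUP M. ereal (saddle_f Y M A)) =
        ereal (- 3 / (real CARD('t) powr (2/3)) * trace (psd_powr (A ** transpose A) (2/3)))
    \<and> (SUP M. INF Y. ereal (saddle_f Y M A)) =
        ereal (- 3 / (real CARD('t) powr (2/3)) * trace (psd_powr (A ** transpose A) (2/3)))"
proof -
  obtain U d where "orthogonal_matrix U" "\<And>i. d i \<ge> 0"
      "A ** transpose A = U ** diag_mat d ** transpose U"
    using gram_matrix_diagonalization[of A] by blast
  then obtain V e where V: "orthogonal_matrix V" "\<And>i. e i \<ge> 0"
      "A ** transpose A = V ** diag_mat e ** transpose V"
    and powr: "psd_powr (A ** transpose A) (2/3) = V ** diag_mat (\<lambda>i. e i powr (2/3)) ** transpose V"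
    using psd_powr_spectral by blast
  have "real CARD('t) > 0"
    by simp
  then obtain Y0 M0 where gram: "Y0 ** transpose Y0 = real CARD('t) *\<^sub>R M0" and MY: "M0 ** Y0 = A"
    and norm: "trace (transpose M0 ** M0) = real CARD('t) powr (-2/3) * (\<Sum>i\<in>UNIV. e i powr (2/3))"
    using critical_point_construction[OF _ V] by metis
  have "trace (psd_powr (A ** transpose A) (2/3)) = (\<Sum>i\<in>UNIV. e i powr (2/3))"
    unfolding powr by (simp add: trace_orthogonal_conj[OF V(1)] trace_diag_mat)
  then have value_eq: "saddle_f Y0 M0 A
      = - 3 / (real CARD('t) powr (2/3)) * trace (psd_powr (A ** transpose A) (2/3))"
    using saddle_f_saddle_value[OF gram MY] norm by (simp add: powr_minus_divide)
  note saddle = saddle_f_saddle_point[OF gram MY]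
  then have "\<And>M. ereal (saddle_f Y0 M A) \<le> ereal (saddle_f Y0 M0 A)"
    and "\<And>Y. ereal (saddle_f Y0 M0 A) \<le> ereal (saddle_f Y M0 A)"
    by simp_all
  note minimax = saddle_point_minimax[of "\<lambda>Y M. ereal (saddle_f Y M A)", OF this]
  have "\<exists>Y0 M0. \<forall>Y M. saddle_f Y0 M A \<le> saddle_f Y0 M0 A \<and> saddle_f Y0 M0 A \<le> saddle_f Y M0 A"
    using saddle by blast
  with minimax show ?thesis
    unfolding value_eq by blast
qed

end
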